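(* Let $(a_i)_{i=1}^n$ be a strictly V-shaped finite real sequence ($n\ge2$) and let $\alpha<\beta$ be real numbers. Then there exists a subdivision $\alpha=t_1<t_2<\dots<t_n=\beta$ of $[\alpha,\beta]$ such that $(t_i)_{i=1}^n\in T_a$.
   Context: For a real sequence $(x_i)$, $\Delta x_i=x_{i+1}-x_i$. "Increasing" means strictly increasing. For a real sequence $a=(a_i)_{i=1}^n$, $T_a$ denotes the set of increasing real sequences $(t_i)_{i=1}^n$ such that $(\Delta a_i/\Delta t_i)_{i=1}^{n-1}$ is non-decreasing. A sequence is strictly V-shaped if there are indices $1\le m\le M\le n$ such that $a_1>a_2>\dots>a_m=a_{m+1}=\dots=a_M<a_{M+1}<\dots<a_n$ (i.e. it is strictly monotonic, or strictly decreasing then constant, or constant then strictly increasing, or strictly decreasing then strictly increasing, or strictly decreasing then constant then strictly increasing). *)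

theory Defs
  imports Main "HOL-Analysis.Analysis"
begin

text \<open>Finite sequences (x_i)_{i=1}^n are represented as functions nat => real,
  only the values at indices 1..n being relevant.\<close>

definition fdiff :: "(nat \<Rightarrow> real) \<Rightarrow> nat \<Rightarrow> real" where
  "fdiff x i = x (Suc i) - x i"

definition increasing_seq :: "nat \<Rightarrow> (nat \<Rightarrow> real) \<Rightarrow> bool" where
  "increasing_seq n t \<longleftrightarrow> (\<forall>i. 1 \<le> i \<and> i < n \<longrightarrow> t i < t (Suc i))"

definition in_T :: "nat \<Rightarrow> (nat \<Rightarrow> real) \<Rightarrow> (nat \<Rightarrow> real) \<Rightarrow> bool" where
  "in_T n a t \<longleftrightarrow> increasing_seq n t \<and>
     (\<forall>i j. 1 \<le> i \<and> i \<le> j \<and> j \<le> n - 1 \<longrightarrow>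
        fdiff a i / fdiff t i \<le> fdiff a j / fdiff t j)"

definition strictly_V_shaped :: "nat \<Rightarrow> (nat \<Rightarrow> real) \<Rightarrow> bool" where
  "strictly_V_shaped n a \<longleftrightarrow> (\<exists>m M. 1 \<le> m \<and> m \<le> M \<and> M \<le> n \<and>
     (\<forall>i. 1 \<le> i \<and> i < m \<longrightarrow> a i > a (Suc i)) \<and>
     (\<forall>i. m \<le> i \<and> i < M \<longrightarrow> a i = a (Suc i)) \<and>
     (\<forall>i. M \<le> i \<and> i < n \<longrightarrow> a i < a (Suc i)))"

end

theory Submission
  imports Defs
begin

(* Choose the steps of t proportional to |Delta a_i| (and to 1 where Delta a_i = 0), scaled to
   fill [alpha, beta]. Then every quotient Delta a_i / Delta t_i equals sgn (Delta a_i) divided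
   by the scale, and along a strictly V-shaped sequence these signs run through -1, 0, 1 in
   this order. *)

definition subdivision :: "(nat \<Rightarrow> real) \<Rightarrow> nat \<Rightarrow> real \<Rightarrow> real \<Rightarrow> nat \<Rightarrow> real" where
  "subdivision w n \<alpha> \<beta> k = \<alpha> + (\<beta> - \<alpha>) / (\<Sum>i\<in>{1..<n}. w i) * (\<Sum>i\<in>{1..<k}. w i)"

lemma subdivision_first: "subdivision w n \<alpha> \<beta> 1 = \<alpha>"
  by (simp add: subdivision_def)

lemma subdivision_last:
  assumes "(\<Sum>i\<in>{1..<n}. w i) \<noteq> 0"
  shows "subdivision w n \<alpha> \<beta> n = \<beta>"
  using assms by (simp add: subdivision_def)

lemma fdiff_subdivision:
  assumes "1 \<le> i"
  shows "fdiff (subdivision w n \<alpha> \<beta>) i = (\<beta> - \<alpha>) / (\<Sum>i\<in>{1..<n}. w i) * w i"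
proof -
  have "{1..<Suc i} = insert i {1..<i}"
    using assms by auto
  then show ?thesis
    by (simp add: subdivision_def fdiff_def algebra_simps add_divide_distrib diff_divide_distrib)
qed

lemma strictly_V_shaped_sgn_fdiff:
  assumes "strictly_V_shaped n a"
  obtains m M where "\<And>i. 1 \<le> i \<Longrightarrow> i < n \<Longrightarrow>
    sgn (fdiff a i) = (if i < m then -1 else if i < M then 0 else 1)"
proof -
  obtain m M where dec: "\<And>i. 1 \<le> i \<Longrightarrow> i < m \<Longrightarrow> a i > a (Suc i)"
    and con: "\<And>i. m \<le> i \<Longrightarrow> i < M \<Longrightarrow> a i = a (Suc i)"
    and inc: "\<And>i. M \<le> i \<Longrightarrow> i < n \<Longrightarrow> a i < a (Suc i)"
    using assms unfolding strictly_V_shaped_def by blast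
  have "sgn (fdiff a i) = (if i < m then -1 else if i < M then 0 else 1)"
    if "1 \<le> i" "i < n" for i
    using dec[of i] con[of i] inc[of i] that by (auto simp: fdiff_def)
  then show thesis
    by (rule that)
qed

lemma strictly_V_shaped_sgn_fdiff_mono:
  assumes "strictly_V_shaped n a" "1 \<le> i" "i \<le> j" "j < n"
  shows "sgn (fdiff a i) \<le> sgn (fdiff a j)"
proof -
  obtain m M where "\<And>i. 1 \<le> i \<Longrightarrow> i < n \<Longrightarrow>
      sgn (fdiff a i) = (if i < m then -1 else if i < M then 0 else 1)"
    using strictly_V_shaped_sgn_fdiff[OF assms(1)] by blast
  with assms(2-4) show ?thesis
    by auto
qed

lemma in_T_if_fdiff_proportional:
  fixes c :: real
  assumes "c > 0"
    and steps: "\<And>i. 1 \<le> i \<Longrightarrow> i < n \<Longrightarrow>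
      fdiff t i = c * (if fdiff a i = 0 then 1 else \<bar>fdiff a i\<bar>)"
    and sgn_mono: "\<And>i j. 1 \<le> i \<Longrightarrow> i \<le> j \<Longrightarrow> j < n \<Longrightarrow> sgn (fdiff a i) \<le> sgn (fdiff a j)"
  shows "in_T n a t"
  unfolding in_T_def increasing_seq_def
proof (intro conjI allI impI)
  fix i
  assume "1 \<le> i \<and> i < n"
  then have "fdiff t i > 0"
    using steps[of i] \<open>c > 0\<close> by auto
  then show "t i < t (Suc i)"
    by (simp add: fdiff_def)
next
  have quotient: "fdiff a i / fdiff t i = sgn (fdiff a i) / c" if "1 \<le> i" "i < n" for i
    using steps[OF that] \<open>c > 0\<close> by (auto simp: sgn_if field_simps)
  fix i j
  assume "1 \<le> i \<and> i \<le> j \<and> j \<le> n - 1"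
  then have "1 \<le> i" "i \<le> j" "j < n"
    by auto
  then show "fdiff a i / fdiff t i \<le> fdiff a j / fdiff t j"
    using quotient[of i] quotient[of j] sgn_mono[of i j] \<open>c > 0\<close>
    by (simp add: divide_right_mono)
qed

theorem theorem2p3:
  fixes n :: nat and a :: "nat \<Rightarrow> real" and \<alpha> \<beta> :: real
  assumes "n \<ge> 2"
    and "strictly_V_shaped n a"
    and "\<alpha> < \<beta>"
  shows "\<exists>t :: nat \<Rightarrow> real. t 1 = \<alpha> \<and> t n = \<beta> \<and> in_T n a t"
proof -
  define w where "w i = (if fdiff a i = 0 then 1 else \<bar>fdiff a i\<bar>)" for i
  define t where "t = subdivision w n \<alpha> \<beta>"
  have "(\<Sum>i\<in>{1..<n}. w i) > 0"
    by (rule sum_pos) (use assms(1) in \<open>auto simp: w_def\<close>)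
  then have scale_pos: "(\<beta> - \<alpha>) / (\<Sum>i\<in>{1..<n}. w i) > 0"
    using assms(3) by simp
  have "in_T n a t"
  proof (rule in_T_if_fdiff_proportional[OF scale_pos])
    show "fdiff t i = (\<beta> - \<alpha>) / (\<Sum>i\<in>{1..<n}. w i) *
        (if fdiff a i = 0 then 1 else \<bar>fdiff a i\<bar>)" if "1 \<le> i" for i
      using fdiff_subdivision[OF that] by (simp add: t_def w_def)
  qed (rule strictly_V_shaped_sgn_fdiff_mono[OF assms(2)])
  moreover have "t 1 = \<alpha>"
    unfolding t_def by (rule subdivision_first)
  moreover have "t n = \<beta>"
    unfolding t_def using \<open>(\<Sum>i\<in>{1..<n}. w i) > 0\<close> by (simp add: subdivision_last)
  ultimately show ?thesis
    by blast
qed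

end
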